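(* Let $S\subseteq M_n$ and $T\subseteq M_{n'}$ be noncommutative graphs. If $S\leq T$ (there is a cohomomorphism from $S$ to $T$), then $\mathcal{H}(S)\leq\mathcal{H}(T)$.
   Context: All scalars are complex; $M_{n'\times n}$ denotes complex $n'\times n$ matrices and $M_n=M_{n\times n}$. A noncommutative graph is a linear subspace $S\subseteq M_n$ that contains $I_n$ and is closed under conjugate transpose. We write $S\leq T$ if there exist $m$ and matrices $E_1,\dots,E_m\in M_{n'\times n}$ with $\sum_{i=1}^m E_i^\dagger E_i=I_n$ (Choi-Kraus operators of a quantum channel $M_n\to M_{n'}$) such that $E_i^\dagger BE_j\in S$ for every $B\in T$ and all $i,j\in[m]$. For a subspace $S\subseteq M_n$, $M_m(S)$ denotes the set of $m\times m$ block matrices with every block in $S$, viewed in $M_{mn}$. The Haemers bound is $\mathcal{H}(S)=\min\{\mathrm{rk}(B):\ m\in\mathbb{N},\ B\in M_m(S),\ \sum_{i=1}^m B_{i,i}=I_n\}$. *)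

theory Defs
  imports "Jordan_Normal_Form.Schur_Decomposition" "Jordan_Normal_Form.DL_Rank"
begin

primrec msum :: "nat \<Rightarrow> nat \<Rightarrow> (nat \<Rightarrow> complex mat) \<Rightarrow> complex mat" where
  "msum n 0 f = 0\<^sub>m n n"
| "msum n (Suc k) f = msum n k f + f k"

definition nc_graph :: "nat \<Rightarrow> complex mat set \<Rightarrow> bool" where
  "nc_graph n S \<longleftrightarrow>
     S \<subseteq> carrier_mat n n \<and> 0\<^sub>m n n \<in> S \<and>
     (\<forall>A\<in>S. \<forall>B\<in>S. A + B \<in> S) \<and> (\<forall>c. \<forall>A\<in>S. c \<cdot>\<^sub>m A \<in> S) \<and>
     1\<^sub>m n \<in> S \<and> (\<forall>A\<in>S. mat_adjoint A \<in> S)"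

definition nc_le :: "nat \<Rightarrow> complex mat set \<Rightarrow> nat \<Rightarrow> complex mat set \<Rightarrow> bool" where
  "nc_le n S n' T \<longleftrightarrow>
     (\<exists>m E. (\<forall>i<m. E i \<in> carrier_mat n' n) \<and>
            msum n m (\<lambda>i. mat_adjoint (E i) * E i) = 1\<^sub>m n \<and>
            (\<forall>B\<in>T. \<forall>i<m. \<forall>j<m. mat_adjoint (E i) * B * E j \<in> S))"

text \<open>The m x m block matrix (in M_(mn)) with n x n blocks blk i j (i, j < m).\<close>
definition block_mat :: "nat \<Rightarrow> nat \<Rightarrow> (nat \<Rightarrow> nat \<Rightarrow> complex mat) \<Rightarrow> complex mat" where
  "block_mat n m blk = mat (m * n) (m * n)
     (\<lambda>(r, c). blk (r div n) (c div n) $$ (r mod n, c mod n))"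

definition haemers :: "nat \<Rightarrow> complex mat set \<Rightarrow> nat" where
  "haemers n S = Inf {vec_space.rank (m * n) (block_mat n m blk) | m blk.
       (\<forall>i<m. \<forall>j<m. blk i j \<in> S) \<and> msum n m (\<lambda>i. blk i i) = 1\<^sub>m n}"

end

theory Submission
  imports Defs
begin

text \<open>Let E_1, ..., E_q be the Kraus operators of the cohomomorphism and let B \<in> M_k(T), with
  diagonal blocks summing to I, attain the Haemers bound of T. Pull B back to the qk \<times> qk block
  matrix B' with blocks E_i^\<dagger> B_ab E_j. Its blocks lie in S by the defining property of
  the cohomomorphism, and its diagonal blocks sum to \<Sum>_i E_i^\<dagger> (\<Sum>_a B_aa) E_i
  = \<Sum>_i E_i^\<dagger> E_i = I. Moreover B' = X B Y for block-selection matrices X, Y built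
  from the E_i, and rk (X B Y) \<le> rk B (factor B = P Q through rk B dimensions).
  Hence H(S) \<le> rk B' \<le> rk B = H(T).\<close>

context vec_space begin

lemma rank_mult_le_left:
  assumes P: "P \<in> carrier_mat n r" and Q: "Q \<in> carrier_mat r c"
  shows "rank (P * Q) \<le> rank P"
proof -
  have PQ: "P * Q \<in> carrier_mat n c" using P Q by auto
  have sub: "span (set (cols (P * Q))) \<subseteq> span (set (cols P))"
  proof
    fix y assume "y \<in> span (set (cols (P * Q)))"
    then obtain x where x: "x \<in> carrier_vec c" "y = P * Q *\<^sub>v x"
      using col_space_eq[OF PQ] PQ unfolding col_space_def by auto
    have "y = P *\<^sub>v (Q *\<^sub>v x)" using x P Q assoc_mult_mat_vec by metis
    then have "y \<in> col_space P" using col_space_eq[OF P] P Q x by auto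
    then show "y \<in> span (set (cols P))" unfolding col_space_def .
  qed
  have sP: "VectorSpace.subspace class_ring (span (set (cols P))) V"
    using P cols_dim span_is_subspace by blast
  have sPQ: "VectorSpace.subspace class_ring (span (set (cols (P * Q)))) V"
    using PQ cols_dim span_is_subspace by blast
  have "vectorspace.dim class_ring
          ((vs (span (set (cols P))))\<lparr>carrier := span (set (cols (P * Q)))\<rparr>)
        \<le> vectorspace.dim class_ring (vs (span (set (cols P))))"
    by (rule vectorspace.subspace_dim[OF subspace_is_vs[OF sP] nested_subspaces[OF sP sPQ sub]
          fin_dim_span_cols[OF P]])
      (use fin_dim_span_cols[OF PQ] in simp)
  then show ?thesis unfolding rank_def by simp
qed

lemma rank_mult_le_inner_dim:
  assumes "P \<in> carrier_mat n r" and "Q \<in> carrier_mat r c"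
  shows "rank (P * Q) \<le> r"
  using rank_mult_le_left[OF assms] rank_le_nc[OF assms(1)] by linarith

lemma cols_subset_span_maximal_indpt:
  assumes A: "A \<in> carrier_mat n nc"
    and max: "maximal S (\<lambda>T. T \<subseteq> set (cols A) \<and> lin_indpt T)"
  shows "set (cols A) \<subseteq> span S"
proof
  fix v assume v: "v \<in> set (cols A)"
  have SA: "S \<subseteq> set (cols A)" and li: "lin_indpt S" using max unfolding maximal_def by auto
  have colsC: "set (cols A) \<subseteq> carrier_vec n" using A cols_dim by blast
  then have SC: "S \<subseteq> carrier_vec n" using SA by blast
  show "v \<in> span S"
  proof (rule ccontr)
    assume nin: "v \<notin> span S"
    then have "v \<notin> S" using SC span_mem by auto
    then have "lin_indpt (insert v S)"
      using lin_dep_iff_in_span[OF SC li _ \<open>v \<notin> S\<close>] nin v colsC by auto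
    then show False using max v SA \<open>v \<notin> S\<close> unfolding maximal_def by blast
  qed
qed

lemma factor_through_col_space:
  assumes P: "P \<in> carrier_mat n r" and A: "A \<in> carrier_mat n nc"
    and cols: "\<And>j. j < nc \<Longrightarrow> col A j \<in> col_space P"
  shows "\<exists>Q \<in> carrier_mat r nc. A = P * Q"
proof -
  have "\<exists>x. x \<in> carrier_vec r \<and> col A j = P *\<^sub>v x" if "j < nc" for j
    using cols[OF that] P unfolding col_space_eq[OF P] by auto
  then obtain x where x: "\<And>j. j < nc \<Longrightarrow> x j \<in> carrier_vec r \<and> col A j = P *\<^sub>v x j"
    by metis
  define Q where "Q = mat r nc (\<lambda>(i, j). x j $ i)"
  have Q: "Q \<in> carrier_mat r nc" unfolding Q_def by auto
  have "A = P * Q"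
  proof (rule eq_matI)
    fix i j assume "i < dim_row (P * Q)" and "j < dim_col (P * Q)"
    then have i: "i < n" and j: "j < nc" using P Q by auto
    have "col Q j = x j" unfolding Q_def using x[OF j] j by (auto simp: col_def)
    then have "(P * Q) $$ (i, j) = (P *\<^sub>v x j) $ i" using i j P Q by (simp add: mult_mat_vec_def)
    also have "\<dots> = col A j $ i" using x[OF j] by simp
    finally show "A $$ (i, j) = (P * Q) $$ (i, j)" using A i j by simp
  qed (use A P Q in auto)
  then show ?thesis using Q by blast
qed

lemma rank_factorization:
  assumes A: "A \<in> carrier_mat n nc"
  shows "\<exists>P Q. P \<in> carrier_mat n (rank A) \<and> Q \<in> carrier_mat (rank A) nc \<and> A = P * Q"
proof -
  obtain S where max: "maximal S (\<lambda>T. T \<subseteq> set (cols A) \<and> lin_indpt T)"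
    using maximal_exists[of "\<lambda>T. T \<subseteq> set (cols A) \<and> lin_indpt T" "card (set (cols A))" "{}"]
    by (meson List.finite_set card_mono empty_iff empty_subsetI finite_lin_indpt2 rev_finite_subset)
  have SA: "S \<subseteq> set (cols A)" using max unfolding maximal_def by auto
  then have SC: "S \<subseteq> carrier_vec n" using A cols_dim by blast
  obtain ss where ss: "set ss = S" "distinct ss"
    using finite_distinct_list[OF finite_subset[OF SA List.finite_set]] by blast
  have "length ss = rank A" using rank_card_indpt[OF A max] distinct_card[OF ss(2)] ss(1) by simp
  then have P: "mat_of_cols n ss \<in> carrier_mat n (rank A)" by auto
  have colsP: "cols (mat_of_cols n ss) = ss" using ss SC by (intro cols_mat_of_cols) auto
  have "col A j \<in> col_space (mat_of_cols n ss)" if "j < nc" for j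
  proof -
    have "col A j \<in> set (cols A)" using A that by (simp add: cols_def)
    then show ?thesis
      using cols_subset_span_maximal_indpt[OF A max] unfolding col_space_def colsP ss(1) by blast
  qed
  then obtain Q where "Q \<in> carrier_mat (rank A) nc" "A = mat_of_cols n ss * Q"
    using factor_through_col_space[OF P A] by blast
  then show ?thesis using P by blast
qed

end

lemma rank_mult_sandwich_le:
  assumes B: "B \<in> carrier_mat N N" and X: "X \<in> carrier_mat M N" and Y: "Y \<in> carrier_mat N M"
  shows "vec_space.rank M (X * B * Y) \<le> vec_space.rank N B"
proof -
  obtain P Q where P: "P \<in> carrier_mat N (vec_space.rank N B)"
    and Q: "Q \<in> carrier_mat (vec_space.rank N B) N" and BPQ: "B = P * Q"
    using vec_space.rank_factorization[OF B] by blast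
  have "X * B * Y = X * P * Q * Y" using X P Q unfolding BPQ by (simp add: assoc_mult_mat)
  also have "\<dots> = (X * P) * (Q * Y)" using X P Q Y by (intro assoc_mult_mat) auto
  finally have "X * B * Y = (X * P) * (Q * Y)" .
  moreover have "X * P \<in> carrier_mat M (vec_space.rank N B)" "Q * Y \<in> carrier_mat (vec_space.rank N B) M"
    using X Y P Q by auto
  ultimately show ?thesis using vec_space.rank_mult_le_inner_dim by simp
qed

lemma sum_lessThan_mult_nat:
  fixes f :: "nat \<Rightarrow> 'a :: comm_monoid_add"
  shows "(\<Sum>u < K * k. f u) = (\<Sum>l < K. \<Sum>v < k. f (l * k + v))"
proof -
  have "(\<Sum>v<k. f (l * k + v)) = (\<Sum>u = l * k..<l * k + k. f u)" for l
    using sum.shift_bounds_nat_ivl[of f 0 "l * k" k] by (simp add: add.commute atLeast0LessThan)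
  then show ?thesis by (simp add: sum.nat_group)
qed


lemma mult_add_less_mult_nat: "l < K \<Longrightarrow> v < k \<Longrightarrow> l * k + v < K * (k :: nat)"
  by (metis add_less_cancel_left less_le_trans mult_Suc mult_le_mono1 Suc_leI add.commute)

lemma div_mod_less_of_less_mult:
  assumes "p < q * (k :: nat)"
  shows "p div k < q" and "p mod k < k"
proof -
  show "p div k < q" using assms by (simp add: less_mult_imp_div_less)
  have "k > 0" using assms by (auto intro: gr0I)
  then show "p mod k < k" by simp
qed

definition blocks_mat :: "nat \<Rightarrow> nat \<Rightarrow> nat \<Rightarrow> nat \<Rightarrow> (nat \<Rightarrow> nat \<Rightarrow> 'a mat) \<Rightarrow> 'a mat" where
  "blocks_mat rn cn R C blk = mat (R * rn) (C * cn)
     (\<lambda>(r, c). blk (r div rn) (c div cn) $$ (r mod rn, c mod cn))"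

lemma block_mat_eq_blocks_mat: "block_mat n m blk = blocks_mat n n m m blk"
  unfolding block_mat_def blocks_mat_def ..

lemma dim_blocks_mat [simp]:
  "dim_row (blocks_mat rn cn R C blk) = R * rn" "dim_col (blocks_mat rn cn R C blk) = C * cn"
  unfolding blocks_mat_def by simp_all

lemma blocks_mat_carrier [simp]: "blocks_mat rn cn R C blk \<in> carrier_mat (R * rn) (C * cn)"
  by (simp add: carrier_matI)

lemma index_blocks_mat:
  assumes "r < R * rn" and "c < C * cn"
  shows "blocks_mat rn cn R C blk $$ (r, c) = blk (r div rn) (c div cn) $$ (r mod rn, c mod cn)"
  using assms unfolding blocks_mat_def by simp

lemma blocks_mat_mult:
  fixes X Y Z :: "nat \<Rightarrow> nat \<Rightarrow> 'a :: comm_semiring_0 mat"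
  assumes X: "\<And>i l. i < R \<Longrightarrow> l < K \<Longrightarrow> X i l \<in> carrier_mat rn kn"
    and Y: "\<And>l j. l < K \<Longrightarrow> j < C \<Longrightarrow> Y l j \<in> carrier_mat kn cn"
    and Z: "\<And>i j s t. i < R \<Longrightarrow> j < C \<Longrightarrow> s < rn \<Longrightarrow> t < cn \<Longrightarrow>
              Z i j $$ (s, t) = (\<Sum>l < K. (X i l * Y l j) $$ (s, t))"
  shows "blocks_mat rn kn R K X * blocks_mat kn cn K C Y = blocks_mat rn cn R C Z"
proof (rule eq_matI)
  fix r c assume "r < dim_row (blocks_mat rn cn R C Z)" and "c < dim_col (blocks_mat rn cn R C Z)"
  then have r: "r < R * rn" and c: "c < C * cn" by auto
  define i s j t where "i = r div rn" "s = r mod rn" "j = c div cn" "t = c mod cn"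
  have i: "i < R" and s: "s < rn" and j: "j < C" and t: "t < cn"
    using div_mod_less_of_less_mult[OF r] div_mod_less_of_less_mult[OF c] unfolding i_s_j_t_def by auto
  have "(blocks_mat rn kn R K X * blocks_mat kn cn K C Y) $$ (r, c) =
     (\<Sum>u < K * kn. blocks_mat rn kn R K X $$ (r, u) * blocks_mat kn cn K C Y $$ (u, c))"
    using r c by (simp add: scalar_prod_def lessThan_atLeast0)
  also have "\<dots> = (\<Sum>l < K. \<Sum>v < kn. X i l $$ (s, v) * Y l j $$ (v, t))"
    unfolding sum_lessThan_mult_nat
    using r c by (intro sum.cong refl) (simp add: index_blocks_mat mult_add_less_mult_nat i_s_j_t_def)
  also have "\<dots> = (\<Sum>l < K. (X i l * Y l j) $$ (s, t))"
  proof (intro sum.cong refl)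
    fix l assume "l \<in> {..<K}"
    then have "X i l \<in> carrier_mat rn kn" and "Y l j \<in> carrier_mat kn cn" using X[OF i] Y[OF _ j] by auto
    then show "(\<Sum>v < kn. X i l $$ (s, v) * Y l j $$ (v, t)) = (X i l * Y l j) $$ (s, t)"
      using s t by (simp add: scalar_prod_def lessThan_atLeast0)
  qed
  also have "\<dots> = blocks_mat rn cn R C Z $$ (r, c)"
    using Z[OF i j s t] r c by (simp add: index_blocks_mat i_s_j_t_def)
  finally show "(blocks_mat rn kn R K X * blocks_mat kn cn K C Y) $$ (r, c) = blocks_mat rn cn R C Z $$ (r, c)" .
qed auto

lemma blocks_mat_mult_select_left:
  fixes X :: "nat \<Rightarrow> 'a :: comm_semiring_0 mat" and Y :: "nat \<Rightarrow> nat \<Rightarrow> 'a mat"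
  assumes \<sigma>: "\<And>i. i < R \<Longrightarrow> \<sigma> i < K" and X: "\<And>i. i < R \<Longrightarrow> X i \<in> carrier_mat rn kn"
    and Y: "\<And>l j. l < K \<Longrightarrow> j < C \<Longrightarrow> Y l j \<in> carrier_mat kn cn"
  shows "blocks_mat rn kn R K (\<lambda>i l. if l = \<sigma> i then X i else 0\<^sub>m rn kn) * blocks_mat kn cn K C Y
       = blocks_mat rn cn R C (\<lambda>i j. X i * Y (\<sigma> i) j)"
proof (rule blocks_mat_mult)
  fix i j s t assume i: "i < R" and j: "j < C" and s: "s < rn" and t: "t < cn"
  have "(\<Sum>l < K. ((if l = \<sigma> i then X i else 0\<^sub>m rn kn) * Y l j) $$ (s, t))
      = (\<Sum>l < K. if l = \<sigma> i then (X i * Y (\<sigma> i) j) $$ (s, t) else 0)"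
  proof (intro sum.cong refl)
    fix l assume "l \<in> {..<K}"
    then show "((if l = \<sigma> i then X i else 0\<^sub>m rn kn) * Y l j) $$ (s, t)
        = (if l = \<sigma> i then (X i * Y (\<sigma> i) j) $$ (s, t) else 0)"
      using X[OF i] Y[OF _ j, of l] s t by auto
  qed
  also have "\<dots> = (X i * Y (\<sigma> i) j) $$ (s, t)" using \<sigma>[OF i] by simp
  finally show "(X i * Y (\<sigma> i) j) $$ (s, t)
      = (\<Sum>l < K. ((if l = \<sigma> i then X i else 0\<^sub>m rn kn) * Y l j) $$ (s, t))" by simp
qed (use X Y in auto)

lemma blocks_mat_mult_select_right:
  fixes X :: "nat \<Rightarrow> nat \<Rightarrow> 'a :: comm_semiring_0 mat" and Y :: "nat \<Rightarrow> 'a mat"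
  assumes \<tau>: "\<And>j. j < C \<Longrightarrow> \<tau> j < K" and Y: "\<And>j. j < C \<Longrightarrow> Y j \<in> carrier_mat kn cn"
    and X: "\<And>i l. i < R \<Longrightarrow> l < K \<Longrightarrow> X i l \<in> carrier_mat rn kn"
  shows "blocks_mat rn kn R K X * blocks_mat kn cn K C (\<lambda>l j. if l = \<tau> j then Y j else 0\<^sub>m kn cn)
       = blocks_mat rn cn R C (\<lambda>i j. X i (\<tau> j) * Y j)"
proof (rule blocks_mat_mult)
  fix i j s t assume i: "i < R" and j: "j < C" and s: "s < rn" and t: "t < cn"
  have "(\<Sum>l < K. (X i l * (if l = \<tau> j then Y j else 0\<^sub>m kn cn)) $$ (s, t))
      = (\<Sum>l < K. if l = \<tau> j then (X i (\<tau> j) * Y j) $$ (s, t) else 0)"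
  proof (intro sum.cong refl)
    fix l assume "l \<in> {..<K}"
    then show "(X i l * (if l = \<tau> j then Y j else 0\<^sub>m kn cn)) $$ (s, t)
        = (if l = \<tau> j then (X i (\<tau> j) * Y j) $$ (s, t) else 0)"
      using X[OF i, of l] Y[OF j] s t by auto
  qed
  also have "\<dots> = (X i (\<tau> j) * Y j) $$ (s, t)" using \<tau>[OF j] by simp
  finally show "(X i (\<tau> j) * Y j) $$ (s, t)
      = (\<Sum>l < K. (X i l * (if l = \<tau> j then Y j else 0\<^sub>m kn cn)) $$ (s, t))" by simp
qed (use X Y in auto)

lemma msum_carrier: "(\<And>i. i < k \<Longrightarrow> f i \<in> carrier_mat n n) \<Longrightarrow> msum n k f \<in> carrier_mat n n"
  by (induction k) auto

lemma msum_cong: "(\<And>i. i < k \<Longrightarrow> f i = g i) \<Longrightarrow> msum n k f = msum n k g"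
  by (induction k) auto

lemma index_msum:
  assumes "\<And>i. i < k \<Longrightarrow> f i \<in> carrier_mat n n" and "s < n" and "t < n"
  shows "msum n k f $$ (s, t) = (\<Sum>i < k. f i $$ (s, t))"
  using assms(1)
proof (induction k)
  case (Suc k)
  have "f k \<in> carrier_mat n n" using Suc.prems by simp
  then have "(msum n k f + f k) $$ (s, t) = msum n k f $$ (s, t) + f k $$ (s, t)"
    using assms(2,3) by simp
  with Suc show ?case by simp
qed (use assms(2,3) in simp)

lemma msum_lessThan_mult:
  assumes F: "\<And>p. p < m * k \<Longrightarrow> F p \<in> carrier_mat n n"
  shows "msum n (m * k) F = msum n m (\<lambda>i. msum n k (\<lambda>a. F (i * k + a)))"
proof -
  have F': "F (i * k + a) \<in> carrier_mat n n" if "i < m" "a < k" for i a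
    using F mult_add_less_mult_nat[OF that] by blast
  have inner: "msum n k (\<lambda>a. F (i * k + a)) \<in> carrier_mat n n" if "i < m" for i
    using F' that by (intro msum_carrier) auto
  have lhs: "msum n (m * k) F \<in> carrier_mat n n" using F by (rule msum_carrier)
  have rhs: "msum n m (\<lambda>i. msum n k (\<lambda>a. F (i * k + a))) \<in> carrier_mat n n"
    using inner by (rule msum_carrier)
  show ?thesis
  proof (rule eq_matI)
    fix s t assume "s < dim_row (msum n m (\<lambda>i. msum n k (\<lambda>a. F (i * k + a))))"
      and "t < dim_col (msum n m (\<lambda>i. msum n k (\<lambda>a. F (i * k + a))))"
    then have s: "s < n" and t: "t < n" using rhs by auto
    show "msum n (m * k) F $$ (s, t) = msum n m (\<lambda>i. msum n k (\<lambda>a. F (i * k + a))) $$ (s, t)"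
      using F F' inner s t by (simp add: index_msum sum_lessThan_mult_nat)
  qed (use lhs rhs in \<open>simp_all add: carrier_matD\<close>)
qed

lemma msum_mult_sandwich:
  assumes A: "A \<in> carrier_mat n n'" and C: "C \<in> carrier_mat n' n"
    and g: "\<And>l. l < k \<Longrightarrow> g l \<in> carrier_mat n' n'"
  shows "A * msum n' k g * C = msum n k (\<lambda>l. A * g l * C)"
  using g
proof (induction k)
  case (Suc k)
  have M: "msum n' k g \<in> carrier_mat n' n'" using Suc.prems by (intro msum_carrier) auto
  have G: "g k \<in> carrier_mat n' n'" using Suc.prems by auto
  have "A * (msum n' k g + g k) * C = (A * msum n' k g + A * g k) * C"
    using A M G by (simp add: mult_add_distrib_mat)
  also have "\<dots> = A * msum n' k g * C + A * g k * C"
    using A M G C by (intro add_mult_distrib_mat) auto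
  finally show ?case using Suc by simp
qed (use A C in simp)

lemma mat_adjoint_carrier: "E \<in> carrier_mat a b \<Longrightarrow> mat_adjoint E \<in> carrier_mat b a"
  unfolding mat_adjoint_def by auto

text \<open>Block p = i * k + a of the pulled-back matrix stands for the pair (i, a) of a Kraus index
  and a block index of the original matrix.\<close>

definition kraus_pullback ::
    "nat \<Rightarrow> (nat \<Rightarrow> complex mat) \<Rightarrow> (nat \<Rightarrow> nat \<Rightarrow> complex mat) \<Rightarrow> nat \<Rightarrow> nat \<Rightarrow> complex mat" where
  "kraus_pullback k E blk p r = mat_adjoint (E (p div k)) * blk (p mod k) (r mod k) * E (r div k)"

lemma rank_block_mat_kraus_pullback_le:
  assumes E: "\<And>i. i < q \<Longrightarrow> E i \<in> carrier_mat n' n"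
    and blk: "\<And>a b. a < k \<Longrightarrow> b < k \<Longrightarrow> blk a b \<in> carrier_mat n' n'"
  shows "vec_space.rank (q * k * n) (block_mat n (q * k) (kraus_pullback k E blk))
         \<le> vec_space.rank (k * n') (block_mat n' k blk)"
proof -
  note qk = div_mod_less_of_less_mult[of _ q k]
  have adj: "mat_adjoint (E (p div k)) \<in> carrier_mat n n'" if "p < q * k" for p
    by (rule mat_adjoint_carrier[OF E[OF qk(1)[OF that]]])
  have adj_blk: "mat_adjoint (E (p div k)) * blk (p mod k) b \<in> carrier_mat n n'"
    if "p < q * k" and "b < k" for p b
    using adj[OF that(1)] blk[OF qk(2)[OF that(1)] that(2)] by (rule mult_carrier_mat)
  define X where "X = blocks_mat n n' (q * k) k
    (\<lambda>p a. if a = p mod k then mat_adjoint (E (p div k)) else 0\<^sub>m n n')"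
  define Y where "Y = blocks_mat n' n k (q * k) (\<lambda>b r. if b = r mod k then E (r div k) else 0\<^sub>m n' n)"
  have "X * block_mat n' k blk
      = blocks_mat n n' (q * k) k (\<lambda>p b. mat_adjoint (E (p div k)) * blk (p mod k) b)"
    unfolding X_def block_mat_eq_blocks_mat
    by (rule blocks_mat_mult_select_left) (simp_all add: qk adj blk)
  also have "\<dots> * Y = block_mat n (q * k) (kraus_pullback k E blk)"
    unfolding Y_def block_mat_eq_blocks_mat kraus_pullback_def
    by (rule blocks_mat_mult_select_right) (simp_all add: qk adj_blk E)
  finally have "block_mat n (q * k) (kraus_pullback k E blk) = X * block_mat n' k blk * Y" ..
  then show ?thesis
    by (simp add: rank_mult_sandwich_le X_def Y_def block_mat_eq_blocks_mat)
qed

lemma msum_diag_kraus_pullback: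
  assumes E: "\<And>i. i < q \<Longrightarrow> E i \<in> carrier_mat n' n"
    and blk: "\<And>a. a < k \<Longrightarrow> blk a a \<in> carrier_mat n' n'"
  shows "msum n (q * k) (\<lambda>p. kraus_pullback k E blk p p)
       = msum n q (\<lambda>i. mat_adjoint (E i) * msum n' k (\<lambda>a. blk a a) * E i)"
proof -
  have "kraus_pullback k E blk p p \<in> carrier_mat n n" if "p < q * k" for p
    using E[OF div_mod_less_of_less_mult(1)[OF that]] blk[OF div_mod_less_of_less_mult(2)[OF that]]
    unfolding kraus_pullback_def by (metis mat_adjoint_carrier mult_carrier_mat)
  then have "msum n (q * k) (\<lambda>p. kraus_pullback k E blk p p)
      = msum n q (\<lambda>i. msum n k (\<lambda>a. kraus_pullback k E blk (i * k + a) (i * k + a)))"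
    by (rule msum_lessThan_mult)
  also have "\<dots> = msum n q (\<lambda>i. msum n k (\<lambda>a. mat_adjoint (E i) * blk a a * E i))"
    by (intro msum_cong) (simp add: kraus_pullback_def)
  also have "\<dots> = msum n q (\<lambda>i. mat_adjoint (E i) * msum n' k (\<lambda>a. blk a a) * E i)"
    using E blk by (intro msum_cong msum_mult_sandwich[symmetric] mat_adjoint_carrier) auto
  finally show ?thesis .
qed

lemma haemers_le_rank:
  assumes "\<And>i j. i < m \<Longrightarrow> j < m \<Longrightarrow> blk i j \<in> S" and "msum n m (\<lambda>i. blk i i) = 1\<^sub>m n"
  shows "haemers n S \<le> vec_space.rank (m * n) (block_mat n m blk)"
  unfolding haemers_def by (rule cInf_lower) (use assms in auto)

lemma haemers_attained:
  assumes "1\<^sub>m n \<in> S"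
  obtains m blk where "\<And>i j. i < m \<Longrightarrow> j < m \<Longrightarrow> blk i j \<in> S"
    and "msum n m (\<lambda>i. blk i i) = 1\<^sub>m n"
    and "haemers n S = vec_space.rank (m * n) (block_mat n m blk)"
proof -
  have "\<exists>m blk. (\<forall>i<m. \<forall>j<m. blk i j \<in> S) \<and> msum n m (\<lambda>i. blk i i) = 1\<^sub>m n"
    using assms by (intro exI[of _ 1] exI[of _ "\<lambda>_ _. 1\<^sub>m n"]) simp
  then have "haemers n S \<in> {vec_space.rank (m * n) (block_mat n m blk) | m blk.
       (\<forall>i<m. \<forall>j<m. blk i j \<in> S) \<and> msum n m (\<lambda>i. blk i i) = 1\<^sub>m n}"
    unfolding haemers_def by (intro Inf_nat_def1) blast
  then show thesis using that by blast
qed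

theorem mainTheorem7:
  fixes S T :: "complex mat set" and n n' :: nat
  assumes "nc_graph n S" and "nc_graph n' T" and "nc_le n S n' T"
  shows "haemers n S \<le> haemers n' T"
proof -
  have T1: "1\<^sub>m n' \<in> T" and Tc: "T \<subseteq> carrier_mat n' n'"
    using assms(2) unfolding nc_graph_def by auto
  obtain q E where E: "\<And>i. i < q \<Longrightarrow> E i \<in> carrier_mat n' n"
    and kraus: "msum n q (\<lambda>i. mat_adjoint (E i) * E i) = 1\<^sub>m n"
    and ES: "\<forall>B\<in>T. \<forall>i<q. \<forall>j<q. mat_adjoint (E i) * B * E j \<in> S"
    using assms(3) unfolding nc_le_def by blast
  obtain k blk where blkT: "\<And>a b. a < k \<Longrightarrow> b < k \<Longrightarrow> blk a b \<in> T"
    and diag: "msum n' k (\<lambda>a. blk a a) = 1\<^sub>m n'"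
    and rank: "haemers n' T = vec_space.rank (k * n') (block_mat n' k blk)"
    using haemers_attained[OF T1] by blast
  have blk: "\<And>a b. a < k \<Longrightarrow> b < k \<Longrightarrow> blk a b \<in> carrier_mat n' n'" using blkT Tc by blast
  have "msum n (q * k) (\<lambda>p. kraus_pullback k E blk p p)
      = msum n q (\<lambda>i. mat_adjoint (E i) * msum n' k (\<lambda>a. blk a a) * E i)"
    using E blk by (rule msum_diag_kraus_pullback)
  also have "\<dots> = msum n q (\<lambda>i. mat_adjoint (E i) * E i)"
    unfolding diag by (intro msum_cong) (simp add: right_mult_one_mat[OF mat_adjoint_carrier[OF E]])
  also have "\<dots> = 1\<^sub>m n" by (rule kraus)
  finally have "msum n (q * k) (\<lambda>p. kraus_pullback k E blk p p) = 1\<^sub>m n" .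
  then have "haemers n S \<le> vec_space.rank (q * k * n) (block_mat n (q * k) (kraus_pullback k E blk))"
    using ES blkT div_mod_less_of_less_mult[of _ q k]
    by (intro haemers_le_rank) (auto simp: kraus_pullback_def)
  also have "\<dots> \<le> haemers n' T"
    unfolding rank using E blk by (rule rank_block_mat_kraus_pullback_le)
  finally show ?thesis .
qed

end
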